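(* For an integer $d\ge1$, let $a^+(n;d)$ (resp. $a^-(n;d)$) denote the number of partitions of $n$ whose Frobenius symbol has exactly $d$ columns and whose last parity block is positive (resp. negative). Then, as formal power series in $q$, \[ \sum_{n=1}^{\infty} a^+(n;d) q^n = \frac{q^{d^2+d}}{(q;q)_d^2 \, (1+q^d)} \qquad\text{and}\qquad \sum_{n=1}^{\infty} a^-(n;d) q^n = \frac{q^{d^2}}{(q;q)_d^2 \,(1+q^d)}. \]
   Context: Every partition $\lambda$ of $n$ is represented by its Frobenius symbol $\begin{pmatrix} x_1 & \cdots & x_d\\ y_1&\cdots & y_d\end{pmatrix}$, where $d$ is the number of cells on the main diagonal of the Ferrers diagram, $x_i$ (resp. $y_i$) is the number of cells in row $i$ to the right of (resp. in column $i$ below) the diagonal, so $x_1>\cdots>x_d\ge 0$, $y_1>\cdots>y_d\ge0$ and $\sum_{i=1}^d(x_i+y_i+1)=n$; $d$ is called the number of columns. Column $i$ is positive if $x_i-y_i\ge 1$ and negative if $x_i-y_i\le 0$. The parity blocks of $\lambda$ are the maximal sets of contiguous columns all having the same sign; a block is positive (resp. negative) if its columns are positive (resp. negative). Notation: $(a;q)_n=(1-a)(1-aq)\cdots(1-aq^{n-1})$. *)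

theory Defs
  imports Main "HOL-Computational_Algebra.Formal_Power_Series"
begin

definition is_partition :: "nat \<Rightarrow> nat list \<Rightarrow> bool" where
  "is_partition n p \<longleftrightarrow> sorted_wrt (\<ge>) p \<and> 0 \<notin> set p \<and> sum_list p = n"

(* i-th part, 1-based (0 beyond the length) *)
definition part :: "nat list \<Rightarrow> nat \<Rightarrow> nat" where
  "part p i = (if 1 \<le> i \<and> i \<le> length p then p ! (i - 1) else 0)"

definition conj_part :: "nat list \<Rightarrow> nat \<Rightarrow> nat" where
  "conj_part p j = length (filter (\<lambda>a. j \<le> a) p)"

(* number of cells on the main diagonal = number of Frobenius columns d *)
definition frob_d :: "nat list \<Rightarrow> nat" where
  "frob_d p = card {i \<in> {1..length p}. i \<le> part p i}"

(* Frobenius symbol entries: x_i = cells of row i right of diagonal, y_i = cells of column i below *)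
definition frob_x :: "nat list \<Rightarrow> nat \<Rightarrow> nat" where
  "frob_x p i = part p i - i"

definition frob_y :: "nat list \<Rightarrow> nat \<Rightarrow> nat" where
  "frob_y p i = conj_part p i - i"

definition col_pos :: "nat list \<Rightarrow> nat \<Rightarrow> bool" where
  "col_pos p i \<longleftrightarrow> int (frob_x p i) - int (frob_y p i) \<ge> 1"

definition same_sign_run :: "nat list \<Rightarrow> nat set \<Rightarrow> bool" where
  "same_sign_run p B \<longleftrightarrow> (\<exists>a b. 1 \<le> a \<and> a \<le> b \<and> b \<le> frob_d p \<and> B = {a..b} \<and>
       (\<forall>i\<in>B. \<forall>j\<in>B. col_pos p i = col_pos p j))"

definition parity_block :: "nat list \<Rightarrow> nat set \<Rightarrow> bool" where
  "parity_block p B \<longleftrightarrow> same_sign_run p B \<and> (\<forall>C. same_sign_run p C \<and> B \<subseteq> C \<longrightarrow> C = B)"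

definition last_block_positive :: "nat list \<Rightarrow> bool" where
  "last_block_positive p \<longleftrightarrow>
     (\<exists>B. parity_block p B \<and> frob_d p \<in> B \<and> (\<forall>i\<in>B. col_pos p i))"

definition last_block_negative :: "nat list \<Rightarrow> bool" where
  "last_block_negative p \<longleftrightarrow>
     (\<exists>B. parity_block p B \<and> frob_d p \<in> B \<and> (\<forall>i\<in>B. \<not> col_pos p i))"

definition a_plus :: "nat \<Rightarrow> nat \<Rightarrow> nat" where
  "a_plus n d = card {p. is_partition n p \<and> frob_d p = d \<and> last_block_positive p}"

definition a_minus :: "nat \<Rightarrow> nat \<Rightarrow> nat" where
  "a_minus n d = card {p. is_partition n p \<and> frob_d p = d \<and> last_block_negative p}"

definition qpoch_q :: "nat \<Rightarrow> rat fps" where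
  "qpoch_q d = (\<Prod>k\<in>{1..d}. 1 - fps_X ^ k)"

end

theory Submission
  imports Defs
begin

text \<open>A partition with Durfee square of side \<open>d\<close> is its first \<open>d\<close> rows, each of length at
  least \<open>d\<close>, on top of a partition into parts at most \<open>d\<close>. Shortening the top rows by \<open>d\<close>,
  then splitting off the length \<open>e\<close> of the shortest of them and the number \<open>c\<close> of parts equal
  to \<open>d\<close> below the square, leaves two independent partitions, each counted by
  \<open>1/(q;q)_(d-1)\<close>, while \<open>(e, c)\<close> contributes \<open>q^(d^2 + d e + d c)\<close>. In Frobenius
  coordinates \<open>x_d = e\<close> and \<open>y_d = c\<close>, and the last parity block has the sign of column \<open>d\<close>.
  So the positive (negative) count sums \<open>q^(d^2 + d e + d c)\<close> over \<open>c < e\<close> (over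
  \<open>e \<le> c\<close>), which gives \<open>q^(d^2 + d)\<close> (resp. \<open>q^(d^2)\<close>) over \<open>(1 - q^(2d)) (1 - q^d)\<close>.\<close>

definition finite_fibres :: "'a set \<Rightarrow> ('a \<Rightarrow> nat) \<Rightarrow> bool" where
  "finite_fibres S w \<longleftrightarrow> (\<forall>n. finite {x\<in>S. w x = n})"

definition weight_gf :: "'a set \<Rightarrow> ('a \<Rightarrow> nat) \<Rightarrow> rat fps" where
  "weight_gf S w = Abs_fps (\<lambda>n. of_nat (card {x\<in>S. w x = n}))"

lemma fibres_bij_betw:
  assumes "bij_betw f A B" "\<And>a. a \<in> A \<Longrightarrow> v (f a) = w a"
  shows "{b\<in>B. v b = n} = f ` {a\<in>A. w a = n}"
  using assms by (auto simp: bij_betw_def)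

lemma weight_gf_bij_betw:
  assumes "bij_betw f A B" "\<And>a. a \<in> A \<Longrightarrow> v (f a) = w a"
  shows "weight_gf B v = weight_gf A w"
proof -
  have "inj_on f {a\<in>A. w a = n}" for n
    using assms(1) by (auto simp: bij_betw_def inj_on_def)
  then show ?thesis
    by (simp add: weight_gf_def fibres_bij_betw[of f A B v w, OF assms] card_image)
qed

lemma finite_fibres_bij_betw:
  assumes "bij_betw f A B" "\<And>a. a \<in> A \<Longrightarrow> v (f a) = w a" "finite_fibres A w"
  shows "finite_fibres B v"
  using assms(3) by (simp add: finite_fibres_def fibres_bij_betw[of f A B v w, OF assms(1,2)])

lemma finite_fibres_finite: "finite S \<Longrightarrow> finite_fibres S w"
  unfolding finite_fibres_def by simp

lemma weight_gf_singleton: "weight_gf {x} w = fps_X ^ w x"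
proof (rule fps_ext)
  fix n
  have "{y\<in>{x}. w y = n} = (if w x = n then {x} else {})" by auto
  then show "fps_nth (weight_gf {x} w) n = fps_nth (fps_X ^ w x) n"
    by (simp add: weight_gf_def)
qed

lemma fibres_Times:
  fixes w :: "'a \<Rightarrow> nat" and v :: "'b \<Rightarrow> nat"
  shows "{x\<in>A \<times> B. (case x of (a, b) \<Rightarrow> w a + v b) = n} =
     (\<Union>i\<le>n. {a\<in>A. w a = i} \<times> {b\<in>B. v b = n - i})"
  by auto

lemma finite_fibres_Times:
  "finite_fibres A w \<Longrightarrow> finite_fibres B v \<Longrightarrow> finite_fibres (A \<times> B) (\<lambda>(a, b). w a + v b)"
  unfolding finite_fibres_def fibres_Times by auto

lemma weight_gf_Times:
  assumes "finite_fibres A w" "finite_fibres B v"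
  shows "weight_gf (A \<times> B) (\<lambda>(a, b). w a + v b) = weight_gf A w * weight_gf B v"
proof (rule fps_ext)
  fix n
  have "card {x\<in>A \<times> B. (case x of (a, b) \<Rightarrow> w a + v b) = n} =
      (\<Sum>i\<le>n. card ({a\<in>A. w a = i} \<times> {b\<in>B. v b = n - i}))"
    using assms unfolding fibres_Times finite_fibres_def by (intro card_UN_disjoint) auto
  then show "fps_nth (weight_gf (A \<times> B) (\<lambda>(a, b). w a + v b)) n =
      fps_nth (weight_gf A w * weight_gf B v) n"
    by (simp add: weight_gf_def fps_mult_nth card_cartesian_product atLeast0AtMost)
qed

lemma weight_gf_shift: "weight_gf A (\<lambda>a. w a + K) = fps_X ^ K * weight_gf A w"
proof (rule fps_ext)
  fix n
  have "{a\<in>A. w a + K = n} = (if n < K then {} else {a\<in>A. w a = n - K})" by auto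
  then show "fps_nth (weight_gf A (\<lambda>a. w a + K)) n = fps_nth (fps_X ^ K * weight_gf A w) n"
    by (simp add: weight_gf_def fps_X_power_mult_nth)
qed

lemma finite_fibres_multiples: "finite_fibres (UNIV :: nat set) (\<lambda>a. k * a)" if "k > 0"
  unfolding finite_fibres_def
proof
  fix n
  have "{a\<in>UNIV. k * a = n} \<subseteq> {..n}" using that by auto
  then show "finite {a\<in>UNIV. k * a = n}" by (rule finite_subset) simp
qed

lemma weight_gf_multiples:
  assumes "k > 0"
  shows "weight_gf (UNIV :: nat set) (\<lambda>a. k * a) = inverse (1 - fps_X ^ k)"
proof -
  define G where "G = weight_gf (UNIV :: nat set) (\<lambda>a. k * a)"
  have fibre: "{a\<in>UNIV. k * a = n} = (if k dvd n then {n div k} else {})" for n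
    using assms by auto
  have "(1 - fps_X ^ k) * G = 1"
  proof (rule fps_ext)
    fix n
    have "fps_nth ((1 - fps_X ^ k) * G) n = fps_nth G n - fps_nth (fps_X ^ k * G) n"
      by (simp add: algebra_simps)
    also have "\<dots> = fps_nth 1 n"
      using assms unfolding G_def weight_gf_def fps_X_power_mult_nth fibre
      by (auto simp: dvd_minus_self elim: dvdE)
    finally show "fps_nth ((1 - fps_X ^ k) * G) n = fps_nth 1 n" .
  qed
  then show ?thesis unfolding G_def by (rule fps_inverse_unique[symmetric])
qed

lemma weight_gf_factor_multiples:
  assumes bij: "bij_betw f (UNIV \<times> A) B"
    and weight: "\<And>e s. s \<in> A \<Longrightarrow> v (f (e, s)) = k * e + w s"
    and "k > 0" "finite_fibres A w"
  shows "finite_fibres B v \<and> weight_gf B v = inverse (1 - fps_X ^ k) * weight_gf A w"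
proof -
  have weight': "v (f x) = (\<lambda>(e, s). k * e + w s) x" if "x \<in> UNIV \<times> A" for x
    using that weight by auto
  have fm: "finite_fibres UNIV (\<lambda>e. k * e)" by (rule finite_fibres_multiples) fact
  have "weight_gf B v = weight_gf (UNIV \<times> A) (\<lambda>(e, s). k * e + w s)"
    by (rule weight_gf_bij_betw[OF bij]) (rule weight')
  also have "\<dots> = inverse (1 - fps_X ^ k) * weight_gf A w"
    using weight_gf_Times[OF fm \<open>finite_fibres A w\<close>] weight_gf_multiples[OF \<open>k > 0\<close>] by simp
  finally show ?thesis
    using finite_fibres_bij_betw[OF bij _ finite_fibres_Times[OF fm]] weight' assms(4) by simp
qed

lemma weight_gf_pairs:
  fixes f :: "nat \<times> nat \<Rightarrow> nat \<times> nat"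
  assumes bij: "bij_betw f UNIV E"
    and weight: "\<And>c k. W (f (c, k)) = a * c + b * k + K"
    and "a > 0" "b > 0"
  shows "weight_gf E W = fps_X ^ K * inverse (1 - fps_X ^ a) * inverse (1 - fps_X ^ b)"
proof -
  have fa: "finite_fibres UNIV (\<lambda>c. a * c)" and fb: "finite_fibres UNIV (\<lambda>k. b * k)"
    using assms by (auto intro: finite_fibres_multiples)
  have "weight_gf E W = weight_gf (UNIV \<times> UNIV) (\<lambda>x. (\<lambda>(c, k). a * c + b * k) x + K)"
    using weight by (intro weight_gf_bij_betw[OF bij[folded UNIV_Times_UNIV]]) auto
  also have "\<dots> = fps_X ^ K * (inverse (1 - fps_X ^ a) * inverse (1 - fps_X ^ b))"
    using weight_gf_Times[OF fa fb] assms(3,4) by (simp add: weight_gf_shift weight_gf_multiples)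
  finally show ?thesis by (simp add: mult.assoc)
qed

lemma qpoch_q_Suc: "qpoch_q (Suc m) = qpoch_q m * (1 - fps_X ^ Suc m)"
  by (simp add: qpoch_q_def prod.nat_ivl_Suc' mult.commute)

lemma fps_nth_qpoch_q_0: "fps_nth (qpoch_q m) 0 = 1"
  by (induction m) (simp_all add: qpoch_q_Suc qpoch_q_def)

definition length_partitions :: "nat \<Rightarrow> nat list set" where
  "length_partitions m = {t. length t = m \<and> sorted_wrt (\<ge>) t}"

definition bounded_partitions :: "nat \<Rightarrow> nat list set" where
  "bounded_partitions m = {b. sorted_wrt (\<ge>) b \<and> (\<forall>x\<in>set b. 1 \<le> x \<and> x \<le> m)}"

lemma sum_list_map_add_const: "sum_list (map (\<lambda>x. x + e) xs) = sum_list xs + length xs * (e::nat)"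
  by (induction xs) auto

lemma sorted_wrt_ge_last_le: "sorted_wrt (\<ge>) t \<Longrightarrow> x \<in> set t \<Longrightarrow> last t \<le> (x::nat)"
  by (induction t) (auto simp: last_in_set)

lemma bij_betw_length_partitions_Suc:
  "bij_betw (\<lambda>(e, s). map (\<lambda>x. x + e) (s @ [0])) (UNIV \<times> length_partitions m)
     (length_partitions (Suc m))"
proof (rule bij_betw_byWitness[where f' = "\<lambda>t. (last t, map (\<lambda>x. x - last t) (butlast t))"])
  show "\<forall>a\<in>UNIV \<times> length_partitions m.
      (\<lambda>t. (last t, map (\<lambda>x. x - last t) (butlast t))) ((\<lambda>(e, s). map (\<lambda>x. x + e) (s @ [0])) a) = a"
    by (auto simp: butlast_append comp_def)
  show "\<forall>t\<in>length_partitions (Suc m).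
      (\<lambda>(e, s). map (\<lambda>x. x + e) (s @ [0])) ((\<lambda>t. (last t, map (\<lambda>x. x - last t) (butlast t))) t) = t"
  proof
    fix t assume t: "t \<in> length_partitions (Suc m)"
    then have "t \<noteq> []" and "\<forall>x\<in>set (butlast t). last t \<le> x"
      by (auto simp: length_partitions_def intro: sorted_wrt_ge_last_le in_set_butlastD)
    then show "(\<lambda>(e, s). map (\<lambda>x. x + e) (s @ [0])) (last t, map (\<lambda>x. x - last t) (butlast t)) = t"
      by (simp add: comp_def map_idI)
  qed
  show "(\<lambda>(e, s). map (\<lambda>x. x + e) (s @ [0])) ` (UNIV \<times> length_partitions m) \<subseteq> length_partitions (Suc m)"
    by (auto simp: length_partitions_def sorted_wrt_map sorted_wrt_append)
  show "(\<lambda>t. (last t, map (\<lambda>x. x - last t) (butlast t))) ` length_partitions (Suc m) \<subseteq>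
      UNIV \<times> length_partitions m"
  proof (rule image_subsetI)
    fix t assume t: "t \<in> length_partitions (Suc m)"
    then have "sorted_wrt (\<ge>) (butlast t)"
      by (simp add: length_partitions_def butlast_conv_take sorted_wrt_take)
    then have "sorted_wrt (\<lambda>x y. y - last t \<le> x - last t) (butlast t)"
      by (rule sorted_wrt_mono_rel[rotated]) auto
    then show "(last t, map (\<lambda>x. x - last t) (butlast t)) \<in> UNIV \<times> length_partitions m"
      using t by (simp add: length_partitions_def sorted_wrt_map)
  qed
qed

lemma finite_fibres_weight_gf_length_partitions:
  "finite_fibres (length_partitions m) sum_list \<and>
     weight_gf (length_partitions m) sum_list = inverse (qpoch_q m)"
proof (induction m)
  case 0
  have "length_partitions 0 = {[]}" by (auto simp: length_partitions_def)
  then show ?case by (simp add: finite_fibres_finite weight_gf_singleton qpoch_q_def)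
next
  case (Suc m)
  have "finite_fibres (length_partitions (Suc m)) sum_list \<and>
      weight_gf (length_partitions (Suc m)) sum_list =
        inverse (1 - fps_X ^ Suc m) * weight_gf (length_partitions m) sum_list"
    using Suc.IH
    by (intro weight_gf_factor_multiples[OF bij_betw_length_partitions_Suc])
       (auto simp: length_partitions_def sum_list_map_add_const)
  then show ?case
    using Suc.IH by (simp add: qpoch_q_Suc fps_inverse_mult mult.commute)
qed

lemma sorted_wrt_ge_replicate_append_filter:
  assumes "sorted_wrt (\<ge>) xs" "\<forall>x\<in>set xs. x \<le> (M::nat)"
  shows "replicate (length (filter ((=) M) xs)) M @ filter (\<lambda>x. x \<noteq> M) xs = xs"
  using assms
proof (induction xs)
  case (Cons a xs)
  show ?case
  proof (cases "a = M")
    case False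
    then have "\<forall>y\<in>set xs. y \<noteq> M" using Cons.prems by fastforce
    then have "filter ((=) M) xs = []" "filter (\<lambda>x. x \<noteq> M) xs = xs"
      by (auto simp: filter_empty_conv filter_id_conv)
    then show ?thesis using False by simp
  qed (use Cons in simp)
qed simp

lemma bij_betw_bounded_partitions_Suc:
  "bij_betw (\<lambda>(c, b). replicate c (Suc m) @ b) (UNIV \<times> bounded_partitions m)
     (bounded_partitions (Suc m))"
proof (rule bij_betw_byWitness[where
      f' = "\<lambda>b. (length (filter ((=) (Suc m)) b), filter (\<lambda>x. x \<noteq> Suc m) b)"])
  show "\<forall>a\<in>UNIV \<times> bounded_partitions m. (\<lambda>b. (length (filter ((=) (Suc m)) b),
      filter (\<lambda>x. x \<noteq> Suc m) b)) ((\<lambda>(c, b). replicate c (Suc m) @ b) a) = a"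
  proof -
    have "filter ((=) (Suc m)) b = [] \<and> filter (\<lambda>x. x \<noteq> Suc m) b = b"
      if "b \<in> bounded_partitions m" for b
      using that by (auto simp: filter_empty_conv filter_id_conv bounded_partitions_def)
    then show ?thesis by (auto simp: filter_replicate)
  qed
  show "\<forall>b\<in>bounded_partitions (Suc m). (\<lambda>(c, b). replicate c (Suc m) @ b)
      ((\<lambda>b. (length (filter ((=) (Suc m)) b), filter (\<lambda>x. x \<noteq> Suc m) b)) b) = b"
    using sorted_wrt_ge_replicate_append_filter by (auto simp: bounded_partitions_def)
  show "(\<lambda>(c, b). replicate c (Suc m) @ b) ` (UNIV \<times> bounded_partitions m) \<subseteq>
      bounded_partitions (Suc m)"
  proof -
    have "sorted_wrt (\<ge>) (replicate c (x::nat))" for c x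
      by (induction c) auto
    then show ?thesis by (auto simp: bounded_partitions_def sorted_wrt_append le_SucI)
  qed
  show "(\<lambda>b. (length (filter ((=) (Suc m)) b), filter (\<lambda>x. x \<noteq> Suc m) b)) `
      bounded_partitions (Suc m) \<subseteq> UNIV \<times> bounded_partitions m"
    by (auto simp: bounded_partitions_def sorted_wrt_filter le_Suc_eq)
qed

lemma finite_fibres_weight_gf_bounded_partitions:
  "finite_fibres (bounded_partitions m) sum_list \<and>
     weight_gf (bounded_partitions m) sum_list = inverse (qpoch_q m)"
proof (induction m)
  case 0
  have "b \<in> bounded_partitions 0 \<Longrightarrow> b = []" for b
    by (cases b) (auto simp: bounded_partitions_def)
  then have "bounded_partitions 0 = {[]}" by (auto simp: bounded_partitions_def)
  then show ?case by (simp add: finite_fibres_finite weight_gf_singleton qpoch_q_def)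
next
  case (Suc m)
  have "finite_fibres (bounded_partitions (Suc m)) sum_list \<and>
      weight_gf (bounded_partitions (Suc m)) sum_list =
        inverse (1 - fps_X ^ Suc m) * weight_gf (bounded_partitions m) sum_list"
    using Suc.IH
    by (intro weight_gf_factor_multiples[OF bij_betw_bounded_partitions_Suc])
       (auto simp: sum_list_replicate)
  then show ?case
    using Suc.IH by (simp add: qpoch_q_Suc fps_inverse_mult mult.commute)
qed

definition durfee_partitions :: "nat \<Rightarrow> nat list set" where
  "durfee_partitions d = {p. sorted_wrt (\<ge>) p \<and> 0 \<notin> set p \<and> frob_d p = d}"

lemma part_eq_nth: "1 \<le> i \<Longrightarrow> i \<le> length p \<Longrightarrow> part p i = p ! (i - 1)"
  by (simp add: part_def)

lemma sorted_wrt_ge_nth_antimono: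
  assumes "sorted_wrt (\<ge>) (p::nat list)" "i \<le> j" "j < length p"
  shows "p ! j \<le> p ! i"
  using assms sorted_wrt_nth_less[OF assms(1)] by (cases "i = j") auto

lemma frob_d_append_shifted:
  assumes t: "t \<in> length_partitions d" and b: "b \<in> bounded_partitions d"
  shows "frob_d (map (\<lambda>x. x + d) t @ b) = d"
proof -
  let ?p = "map (\<lambda>x. x + d) t @ b"
  have lt: "length t = d" using t by (simp add: length_partitions_def)
  have "{i \<in> {1..length ?p}. i \<le> part ?p i} = {1..d}"
  proof (intro set_eqI iffI)
    fix i assume "i \<in> {i \<in> {1..length ?p}. i \<le> part ?p i}"
    then have i: "1 \<le> i" "i \<le> length ?p" "i \<le> ?p ! (i - 1)" by (auto simp: part_eq_nth)
    show "i \<in> {1..d}"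
    proof (rule ccontr)
      assume "i \<notin> {1..d}"
      with i lt have "?p ! (i - 1) \<in> set b" by (auto simp: nth_append)
      then show False using b i \<open>i \<notin> {1..d}\<close> by (auto simp: bounded_partitions_def)
    qed
  next
    fix i assume "i \<in> {1..d}"
    then show "i \<in> {i \<in> {1..length ?p}. i \<le> part ?p i}"
      using lt by (auto simp: part_eq_nth nth_append)
  qed
  then show ?thesis unfolding frob_d_def by simp
qed

lemma durfee_square_fits:
  assumes "sorted_wrt (\<ge>) p" "frob_d p = d" "d \<ge> 1"
  shows "d \<le> length p \<and> d \<le> p ! (d - 1)"
proof (rule ccontr)
  assume not_fits: "\<not> (d \<le> length p \<and> d \<le> p ! (d - 1))"
  have "{i \<in> {1..length p}. i \<le> part p i} \<subseteq> {1..d - 1}"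
  proof
    fix i assume "i \<in> {i \<in> {1..length p}. i \<le> part p i}"
    then have i: "1 \<le> i" "i \<le> length p" "i \<le> p ! (i - 1)"
      by (auto simp: part_eq_nth)
    show "i \<in> {1..d - 1}"
    proof (rule ccontr)
      assume "i \<notin> {1..d - 1}"
      then have "d \<le> i" using i by auto
      moreover have "p ! (i - 1) \<le> p ! (d - 1)"
        using i \<open>d \<le> i\<close> \<open>d \<ge> 1\<close> by (intro sorted_wrt_ge_nth_antimono[OF assms(1)]) auto
      ultimately show False using not_fits i by simp
    qed
  qed
  then have "frob_d p \<le> card {1..d - 1}"
    unfolding frob_d_def by (intro card_mono) auto
  then show False using assms(2,3) by simp
qed

lemma durfee_square_maximal:
  assumes "sorted_wrt (\<ge>) p" "frob_d p = d" "d < length p"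
  shows "p ! d \<le> d"
proof (rule ccontr)
  assume "\<not> p ! d \<le> d"
  have "{1..Suc d} \<subseteq> {i \<in> {1..length p}. i \<le> part p i}"
  proof
    fix i assume i: "i \<in> {1..Suc d}"
    then have "p ! d \<le> p ! (i - 1)"
      using assms(3) by (intro sorted_wrt_ge_nth_antimono[OF assms(1)]) auto
    then show "i \<in> {i \<in> {1..length p}. i \<le> part p i}"
      using i assms(3) \<open>\<not> p ! d \<le> d\<close> by (auto simp: part_eq_nth)
  qed
  then have "card {1..Suc d} \<le> frob_d p"
    unfolding frob_d_def by (intro card_mono) auto
  then show False using assms(2) by simp
qed

lemma durfee_partition_take_drop:
  assumes p: "p \<in> durfee_partitions d" and "d \<ge> 1"
  shows "d \<le> length p" "\<forall>x\<in>set (take d p). d \<le> x" "\<forall>x\<in>set (drop d p). x \<le> d"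
proof -
  have st: "sorted_wrt (\<ge>) p" and fd: "frob_d p = d"
    using p by (auto simp: durfee_partitions_def)
  note fits = durfee_square_fits[OF st fd \<open>d \<ge> 1\<close>]
  then show "d \<le> length p" by simp
  show "\<forall>x\<in>set (take d p). d \<le> x"
  proof
    fix x assume "x \<in> set (take d p)"
    then obtain i where "i < d" "x = p ! i"
      using fits by (auto simp: in_set_conv_nth)
    then show "d \<le> x"
      using fits sorted_wrt_ge_nth_antimono[OF st, of i "d - 1"] by fastforce
  qed
  show "\<forall>x\<in>set (drop d p). x \<le> d"
  proof
    fix x assume "x \<in> set (drop d p)"
    then obtain k where "d + k < length p" "x = p ! (d + k)"
      by (auto simp: in_set_conv_nth less_diff_conv add.commute) blast
    then show "x \<le> d"
      using durfee_square_maximal[OF st fd] sorted_wrt_ge_nth_antimono[OF st, of d "d + k"]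
      by fastforce
  qed
qed

lemma bij_betw_durfee_split:
  assumes "d \<ge> 1"
  shows "bij_betw (\<lambda>(t, b). map (\<lambda>x. x + d) t @ b)
      (length_partitions d \<times> bounded_partitions d) (durfee_partitions d)"
proof (rule bij_betw_byWitness[where f' = "\<lambda>p. (map (\<lambda>x. x - d) (take d p), drop d p)"])
  show "\<forall>a\<in>length_partitions d \<times> bounded_partitions d. (\<lambda>p. (map (\<lambda>x. x - d) (take d p),
      drop d p)) ((\<lambda>(t, b). map (\<lambda>x. x + d) t @ b) a) = a"
    by (auto simp: length_partitions_def comp_def)
  show "(\<lambda>(t, b). map (\<lambda>x. x + d) t @ b) ` (length_partitions d \<times> bounded_partitions d) \<subseteq>
      durfee_partitions d"
    using assms frob_d_append_shifted
    by (fastforce simp: durfee_partitions_def length_partitions_def bounded_partitions_def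
        sorted_wrt_append sorted_wrt_map)
  show "\<forall>p\<in>durfee_partitions d. (\<lambda>(t, b). map (\<lambda>x. x + d) t @ b)
      ((\<lambda>p. (map (\<lambda>x. x - d) (take d p), drop d p)) p) = p"
  proof
    fix p assume "p \<in> durfee_partitions d"
    then have "map (\<lambda>x. x - d + d) (take d p) = take d p"
      using durfee_partition_take_drop(2)[OF _ assms] by (intro map_idI) auto
    then show "(\<lambda>(t, b). map (\<lambda>x. x + d) t @ b) (map (\<lambda>x. x - d) (take d p), drop d p) = p"
      by (simp add: comp_def)
  qed
  show "(\<lambda>p. (map (\<lambda>x. x - d) (take d p), drop d p)) ` durfee_partitions d \<subseteq>
      length_partitions d \<times> bounded_partitions d"
  proof (rule image_subsetI)
    fix p assume p: "p \<in> durfee_partitions d"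
    then have st: "sorted_wrt (\<ge>) p" and "0 \<notin> set p" by (auto simp: durfee_partitions_def)
    then have "sorted_wrt (\<ge>) (take d p)" "sorted_wrt (\<ge>) (drop d p)"
      "\<forall>x\<in>set (drop d p). 1 \<le> x"
      by (auto simp: sorted_wrt_take sorted_wrt_drop Suc_le_eq) (metis in_set_dropD gr0I)
    moreover have "sorted_wrt (\<lambda>x y. y - d \<le> x - d) (take d p)"
      using calculation(1) by (rule sorted_wrt_mono_rel[rotated]) auto
    ultimately show "(map (\<lambda>x. x - d) (take d p), drop d p) \<in>
        length_partitions d \<times> bounded_partitions d"
      using durfee_partition_take_drop[OF p assms]
      by (auto simp: length_partitions_def bounded_partitions_def sorted_wrt_map)
  qed
qed

definition durfee_glue :: "nat \<Rightarrow> (nat \<times> nat) \<times> (nat list \<times> nat list) \<Rightarrow> nat list" where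
  "durfee_glue m = (\<lambda>((e, c), (s, b)).
     map (\<lambda>x. x + e + Suc m) s @ (e + Suc m) # replicate c (Suc m) @ b)"

lemma bij_betw_durfee_glue:
  "bij_betw (durfee_glue m) ((UNIV \<times> UNIV) \<times> (length_partitions m \<times> bounded_partitions m))
     (durfee_partitions (Suc m))"
proof -
  let ?swap = "\<lambda>((e :: nat, c :: nat), (s :: nat list, b :: nat list)). ((e, s), (c, b))"
  have "bij_betw ?swap ((UNIV \<times> UNIV) \<times> (length_partitions m \<times> bounded_partitions m))
      ((UNIV \<times> length_partitions m) \<times> (UNIV \<times> bounded_partitions m))"
    by (rule bij_betw_byWitness[where f' = "\<lambda>((e, s), (c, b)). ((e, c), (s, b))"]) auto
  moreover have "bij_betw (map_prod (\<lambda>(e, s). map (\<lambda>x. x + e) (s @ [0]))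
        (\<lambda>(c, b). replicate c (Suc m) @ b))
      ((UNIV \<times> length_partitions m) \<times> (UNIV \<times> bounded_partitions m))
      (length_partitions (Suc m) \<times> bounded_partitions (Suc m))"
    by (rule bij_betw_map_prod[OF bij_betw_length_partitions_Suc bij_betw_bounded_partitions_Suc])
  moreover have "bij_betw (\<lambda>(t, b). map (\<lambda>x. x + Suc m) t @ b)
      (length_partitions (Suc m) \<times> bounded_partitions (Suc m)) (durfee_partitions (Suc m))"
    by (rule bij_betw_durfee_split) simp
  ultimately have "bij_betw ((\<lambda>(t, b). map (\<lambda>x. x + Suc m) t @ b) \<circ>
      map_prod (\<lambda>(e, s). map (\<lambda>x. x + e) (s @ [0])) (\<lambda>(c, b). replicate c (Suc m) @ b) \<circ> ?swap)
      ((UNIV \<times> UNIV) \<times> (length_partitions m \<times> bounded_partitions m)) (durfee_partitions (Suc m))"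
    by (meson bij_betw_trans)
  moreover have "(\<lambda>(t, b). map (\<lambda>x. x + Suc m) t @ b) \<circ>
      map_prod (\<lambda>(e, s). map (\<lambda>x. x + e) (s @ [0])) (\<lambda>(c, b). replicate c (Suc m) @ b) \<circ> ?swap =
      durfee_glue m"
    by (auto simp: fun_eq_iff durfee_glue_def)
  ultimately show ?thesis by simp
qed

lemma sum_list_durfee_glue:
  assumes "s \<in> length_partitions m"
  shows "sum_list (durfee_glue m ((e, c), (s, b))) =
    (Suc m * Suc m + Suc m * e + Suc m * c) + (sum_list s + sum_list b)"
proof -
  have "sum_list (map (\<lambda>x. x + e + Suc m) s) = sum_list s + m * (e + Suc m)"
    using assms sum_list_map_add_const[of "e + Suc m" s]
    by (simp add: length_partitions_def add.assoc)
  then show ?thesis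
    by (simp add: durfee_glue_def sum_list_replicate algebra_simps)
qed

lemma frob_durfee_glue:
  assumes "s \<in> length_partitions m" "b \<in> bounded_partitions m"
  shows "frob_x (durfee_glue m ((e, c), (s, b))) (Suc m) = e"
    and "frob_y (durfee_glue m ((e, c), (s, b))) (Suc m) = c"
proof -
  have len: "length s = m" using assms(1) by (simp add: length_partitions_def)
  then show "frob_x (durfee_glue m ((e, c), (s, b))) (Suc m) = e"
    by (simp add: frob_x_def part_def durfee_glue_def nth_append)
  have "filter (\<lambda>a. Suc m \<le> a) b = []"
    using assms(2) by (auto simp: bounded_partitions_def filter_empty_conv)
  then show "frob_y (durfee_glue m ((e, c), (s, b))) (Suc m) = c"
    using len by (simp add: frob_y_def conj_part_def durfee_glue_def filter_replicate)
qed

lemma weight_gf_durfee_last_column: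
  "weight_gf {p \<in> durfee_partitions (Suc m). R (frob_x p (Suc m)) (frob_y p (Suc m))} sum_list =
     weight_gf {(e, c). R e c} (\<lambda>(e, c). Suc m * Suc m + Suc m * e + Suc m * c) *
       inverse (qpoch_q m) ^ 2"
proof -
  let ?W = "\<lambda>(e, c). Suc m * Suc m + Suc m * e + Suc m * c"
  let ?P = "length_partitions m \<times> bounded_partitions m"
  have "bij_betw (durfee_glue m) {x \<in> (UNIV \<times> UNIV) \<times> ?P. case_prod R (fst x)}
      {p \<in> durfee_partitions (Suc m). R (frob_x p (Suc m)) (frob_y p (Suc m))}"
    by (rule bij_betw_Collect[OF bij_betw_durfee_glue]) (auto simp: frob_durfee_glue)
  moreover have "{x \<in> (UNIV \<times> UNIV) \<times> ?P. case_prod R (fst x)} = {(e, c). R e c} \<times> ?P"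
    by auto
  ultimately have "weight_gf {p \<in> durfee_partitions (Suc m). R (frob_x p (Suc m)) (frob_y p (Suc m))}
      sum_list = weight_gf ({(e, c). R e c} \<times> ?P) (\<lambda>(x, y). ?W x + (\<lambda>(s, b). sum_list s + sum_list b) y)"
    by (intro weight_gf_bij_betw[where f = "durfee_glue m"]) (auto simp: sum_list_durfee_glue)
  also have "\<dots> = weight_gf {(e, c). R e c} ?W * weight_gf ?P (\<lambda>(s, b). sum_list s + sum_list b)"
  proof (rule weight_gf_Times)
    have "{x \<in> {(e, c). R e c}. ?W x = n} \<subseteq> {..n} \<times> {..n}" for n
      by auto
    then show "finite_fibres {(e, c). R e c} ?W"
      unfolding finite_fibres_def by (meson finite_SigmaI finite_atMost finite_subset)
    show "finite_fibres ?P (\<lambda>(s, b). sum_list s + sum_list b)"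
      using finite_fibres_Times finite_fibres_weight_gf_length_partitions
        finite_fibres_weight_gf_bounded_partitions by blast
  qed
  also have "weight_gf ?P (\<lambda>(s, b). sum_list s + sum_list b) = inverse (qpoch_q m) ^ 2"
    using weight_gf_Times[OF conjunct1[OF finite_fibres_weight_gf_length_partitions]
        conjunct1[OF finite_fibres_weight_gf_bounded_partitions]]
      finite_fibres_weight_gf_length_partitions finite_fibres_weight_gf_bounded_partitions
    by (simp add: power2_eq_square)
  finally show ?thesis .
qed

lemma weight_gf_last_column_positive:
  assumes "D \<ge> 1"
  shows "weight_gf {(e, c). c < e} (\<lambda>(e, c). D * D + D * e + D * c) =
    fps_X ^ (D * D + D) * inverse (1 - fps_X ^ (2 * D)) * inverse (1 - fps_X ^ D)"
proof (rule weight_gf_pairs)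
  show "bij_betw (\<lambda>(c :: nat, k :: nat). (c + k + 1, c)) UNIV {(e, c). c < e}"
    by (rule bij_betw_byWitness[where f' = "\<lambda>(e :: nat, c :: nat). (c, e - c - 1)"]) auto
qed (use assms in \<open>auto simp: algebra_simps\<close>)

lemma weight_gf_last_column_nonpositive:
  assumes "D \<ge> 1"
  shows "weight_gf {(e, c). \<not> c < e} (\<lambda>(e, c). D * D + D * e + D * c) =
    fps_X ^ (D * D) * inverse (1 - fps_X ^ (2 * D)) * inverse (1 - fps_X ^ D)"
proof (rule weight_gf_pairs)
  show "bij_betw (\<lambda>(e :: nat, k :: nat). (e, e + k)) UNIV {(e, c). \<not> c < e}"
    by (rule bij_betw_byWitness[where f' = "\<lambda>(e :: nat, c :: nat). (e, c - e)"]) auto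
qed (use assms in \<open>auto simp: algebra_simps\<close>)

lemma fps_X_power_divide_durfee_factors:
  fixes Q :: "'a::field fps"
  assumes "D \<ge> 1" "fps_nth Q 0 = 1"
  shows "fps_X ^ K * inverse (1 - fps_X ^ (2 * D)) * inverse (1 - fps_X ^ D) * inverse Q ^ 2 =
    fps_X ^ K / ((Q * (1 - fps_X ^ D))\<^sup>2 * (1 + fps_X ^ D))"
proof -
  have "(1 - fps_X ^ (2 * D) :: 'a fps) = (1 - fps_X ^ D) * (1 + fps_X ^ D)"
    by (simp add: power_mult algebra_simps power2_eq_square mult.commute[of 2 D])
  moreover have "fps_nth ((Q * (1 - fps_X ^ D))\<^sup>2 * (1 + fps_X ^ D)) 0 \<noteq> 0"
    using assms by (simp add: power2_eq_square)
  ultimately show ?thesis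
    by (simp add: fps_divide_unit fps_inverse_mult power2_eq_square mult_ac)
qed

lemma parity_block_containing_last_column:
  assumes "frob_d p = d" "d \<ge> 1"
  shows "\<exists>B. parity_block p B \<and> d \<in> B"
proof -
  define R where "R = (\<lambda>B. same_sign_run p B \<and> d \<in> B)"
  have "R {d..d}"
    unfolding R_def same_sign_run_def using assms by (intro conjI exI[of _ d]) auto
  moreover have sub: "R B \<Longrightarrow> B \<subseteq> {1..d}" for B
    unfolding R_def same_sign_run_def using assms(1) by auto
  then have "R B \<Longrightarrow> card B < Suc d" for B
    using card_mono[of "{1..d}" B] by fastforce
  ultimately obtain B where B: "R B" and max: "\<And>C. R C \<Longrightarrow> card C \<le> card B"
    using ex_has_greatest_nat[of R "{d..d}" card "Suc d"] by blast
  have "parity_block p B"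
    unfolding parity_block_def
  proof (intro conjI allI impI)
    show "same_sign_run p B" using B by (simp add: R_def)
    fix C assume C: "same_sign_run p C \<and> B \<subseteq> C"
    then have "R C" using B by (auto simp: R_def)
    then have "finite C" and "card C \<le> card B"
      using sub max finite_subset by blast+
    then show "C = B" using C by (metis card_subset_eq card_mono le_antisym)
  qed
  then show ?thesis using B by (auto simp: R_def)
qed

lemma col_pos_iff: "col_pos p i \<longleftrightarrow> frob_y p i < frob_x p i"
  by (auto simp: col_pos_def)

lemma last_block_sign_iff:
  assumes "frob_d p = d" "d \<ge> 1"
  shows "last_block_positive p \<longleftrightarrow> frob_y p d < frob_x p d"
    and "last_block_negative p \<longleftrightarrow> \<not> frob_y p d < frob_x p d"
proof -
  obtain B where B: "parity_block p B" "d \<in> B"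
    using parity_block_containing_last_column[OF assms] by blast
  have same: "\<forall>i\<in>B. col_pos p i \<longleftrightarrow> col_pos p d"
    using B unfolding parity_block_def same_sign_run_def by blast
  show "last_block_positive p \<longleftrightarrow> frob_y p d < frob_x p d"
    unfolding last_block_positive_def col_pos_iff[symmetric] assms(1)
    using B same by blast
  show "last_block_negative p \<longleftrightarrow> \<not> frob_y p d < frob_x p d"
    unfolding last_block_negative_def col_pos_iff[symmetric] assms(1)
    using B same by blast
qed

lemma sum_list_durfee_partition_pos:
  assumes "p \<in> durfee_partitions d" "d \<ge> 1"
  shows "sum_list p > 0"
proof (cases p)
  case Nil
  then have "frob_d p = 0" by (simp add: frob_d_def)
  then show ?thesis using assms by (simp add: durfee_partitions_def)
next
  case (Cons a q)
  then show ?thesis using assms(1) by (simp add: durfee_partitions_def)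
qed

lemma Abs_fps_count_durfee_partitions:
  assumes "d \<ge> 1" "\<And>p. frob_d p = d \<Longrightarrow> Q p \<longleftrightarrow> P p"
  shows "Abs_fps (\<lambda>n. if n = 0 then 0 else
      of_nat (card {p. is_partition n p \<and> frob_d p = d \<and> Q p})) =
    weight_gf {p \<in> durfee_partitions d. P p} sum_list"
proof (rule fps_ext)
  fix n
  let ?fibre = "{p \<in> {p \<in> durfee_partitions d. P p}. sum_list p = n}"
  have count: "card {p. is_partition n p \<and> frob_d p = d \<and> Q p} = card ?fibre"
    using assms(2) by (auto simp: is_partition_def durfee_partitions_def intro: arg_cong[where f = card])
  have "card ?fibre = 0" if "n = 0"
  proof -
    have "\<forall>p\<in>durfee_partitions d. sum_list p \<noteq> 0"
      using sum_list_durfee_partition_pos[OF _ assms(1)] by (metis less_irrefl)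
    then have "?fibre = {}" using that by blast
    then show ?thesis by (simp only: card.empty)
  qed
  then show "fps_nth (Abs_fps (\<lambda>n. if n = 0 then 0 else
      of_nat (card {p. is_partition n p \<and> frob_d p = d \<and> Q p}))) n =
    fps_nth (weight_gf {p \<in> durfee_partitions d. P p} sum_list) n"
    unfolding weight_gf_def fps_nth_Abs_fps count
    by (cases "n = 0") (simp_all only: if_True if_False of_nat_0 simp_thms)
qed

theorem theorem1p4:
  fixes d :: nat
  assumes "d \<ge> 1"
  shows "Abs_fps (\<lambda>n. if n = 0 then 0 else of_nat (a_plus n d)) =
           fps_X ^ (d\<^sup>2 + d) / ((qpoch_q d)\<^sup>2 * (1 + fps_X ^ d))
       \<and> Abs_fps (\<lambda>n. if n = 0 then 0 else of_nat (a_minus n d)) =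
           fps_X ^ (d\<^sup>2) / ((qpoch_q d)\<^sup>2 * (1 + fps_X ^ d))"
proof -
  obtain m where d: "d = Suc m" using assms by (cases d) auto
  have qpoch: "qpoch_q d = qpoch_q m * (1 - fps_X ^ d)" by (simp add: d qpoch_q_Suc)
  have plus: "Abs_fps (\<lambda>n. if n = 0 then 0 else of_nat (a_plus n d)) =
      weight_gf {p \<in> durfee_partitions d. frob_y p d < frob_x p d} sum_list"
    unfolding a_plus_def
    by (rule Abs_fps_count_durfee_partitions[OF assms last_block_sign_iff(1)[OF _ assms]])
  have minus: "Abs_fps (\<lambda>n. if n = 0 then 0 else of_nat (a_minus n d)) =
      weight_gf {p \<in> durfee_partitions d. \<not> frob_y p d < frob_x p d} sum_list"
    unfolding a_minus_def
    by (rule Abs_fps_count_durfee_partitions[OF assms last_block_sign_iff(2)[OF _ assms]])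
  show ?thesis
    unfolding plus minus
    unfolding d weight_gf_durfee_last_column[of m "\<lambda>e c. c < e"]
      weight_gf_durfee_last_column[of m "\<lambda>e c. \<not> c < e"]
    unfolding d[symmetric] weight_gf_last_column_positive[OF assms]
      weight_gf_last_column_nonpositive[OF assms] qpoch power2_eq_square[of d]
      fps_X_power_divide_durfee_factors[OF assms fps_nth_qpoch_q_0]
    by (intro conjI refl)
qed

end
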